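(* Let $W\subset\mathbb{R}^{n+1}$ be a self-dual Wulff shape. Then $W$ is centrally symmetric (i.e. $x\in W$ implies $-x\in W$) if and only if $W$ is the unit disc $D^{n+1}=\{x\in\mathbb{R}^{n+1}:\|x\|\le1\}$.
   Context: For continuous $\gamma:S^n\to\mathbb{R}_+$, the Wulff shape is $\mathcal{W}_\gamma=\bigcap_{\theta\in S^n}\{x\in\mathbb{R}^{n+1}: x\cdot\theta\le\gamma(\theta)\}$ (every convex body with the origin in its interior is of this form). For each $\theta\in S^n$ the ray $\{r\theta:r>0\}$ meets $\partial\mathcal{W}_\gamma$ in exactly one point $w(\theta)\theta$. The dual Wulff shape is $\mathcal{DW}_\gamma=\mathcal{W}_{\overline\gamma}$ with $\overline\gamma(\theta)=1/w(-\theta)$, and $\mathcal{W}_\gamma$ is self-dual if $\mathcal{W}_\gamma=\mathcal{DW}_\gamma$. *)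

theory Defs
  imports "HOL-Analysis.Analysis"
begin

definition wulff_shape :: "('a::euclidean_space \<Rightarrow> real) \<Rightarrow> 'a set" where
  "wulff_shape \<gamma> = (\<Inter>\<theta>\<in>sphere 0 1. {x. x \<bullet> \<theta> \<le> \<gamma> \<theta>})"

definition wulff_radial :: "('a::euclidean_space \<Rightarrow> real) \<Rightarrow> 'a \<Rightarrow> real" where
  "wulff_radial \<gamma> \<theta> = (THE r. r > 0 \<and> r *\<^sub>R \<theta> \<in> frontier (wulff_shape \<gamma>))"

definition dual_gamma :: "('a::euclidean_space \<Rightarrow> real) \<Rightarrow> 'a \<Rightarrow> real" where
  "dual_gamma \<gamma> \<theta> = 1 / wulff_radial \<gamma> (- \<theta>)"

definition dual_wulff_shape :: "('a::euclidean_space \<Rightarrow> real) \<Rightarrow> 'a set" where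
  "dual_wulff_shape \<gamma> = wulff_shape (dual_gamma \<gamma>)"

definition self_dual :: "('a::euclidean_space \<Rightarrow> real) \<Rightarrow> bool" where
  "self_dual \<gamma> \<longleftrightarrow> wulff_shape \<gamma> = dual_wulff_shape \<gamma>"

end

theory Submission
  imports Defs
begin

text \<open>
  Let \<open>w\<close> be the radial function of \<open>W\<close>. Self-duality means \<open>x \<bullet> \<theta> \<le> 1 / w(-\<theta>)\<close> on \<open>W\<close>.
  For \<open>x = |x| t \<in> W\<close> with \<open>t\<close> a unit vector this gives \<open>|x| \<le> 1 / w(-t)\<close>, while central
  symmetry puts \<open>-x = |x| (-t)\<close> in \<open>W\<close>, so \<open>|x| \<le> w(-t)\<close>; hence \<open>|x|\<^sup>2 \<le> 1\<close> and \<open>W\<close>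
  lies in the unit ball. Consequently \<open>w \<le> 1\<close>, so the dual support function \<open>1 / w(-\<theta>)\<close>
  is at least \<open>1\<close>, and the dual shape, which is \<open>W\<close>, contains the unit ball.
\<close>

lemma norm_le_wulff_shape:
  fixes \<gamma> :: "'a::euclidean_space \<Rightarrow> real"
  assumes "x \<in> wulff_shape \<gamma>" "x \<noteq> 0"
  shows "norm x \<le> \<gamma> (sgn x)"
proof -
  have "x \<bullet> sgn x \<le> \<gamma> (sgn x)"
    using assms by (auto simp: wulff_shape_def norm_sgn)
  moreover have "x \<bullet> sgn x = norm x"
    using assms(2)
    by (simp add: sgn_div_norm divide_inverse power2_norm_eq_inner[symmetric] power2_eq_square)
  ultimately show ?thesis by simp
qed

lemma cball_subset_wulff_shape:
  fixes \<gamma> :: "'a::euclidean_space \<Rightarrow> real"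
  assumes "\<forall>\<theta>\<in>sphere 0 1. r \<le> \<gamma> \<theta>"
  shows "cball 0 r \<subseteq> wulff_shape \<gamma>"
proof
  fix x :: 'a assume "x \<in> cball 0 r"
  then have "x \<bullet> \<theta> \<le> \<gamma> \<theta>" if "norm \<theta> = 1" for \<theta>
    using norm_cauchy_schwarz[of x \<theta>] assms that by force
  then show "x \<in> wulff_shape \<gamma>" by (auto simp: wulff_shape_def)
qed

lemma convex_wulff_shape: "convex (wulff_shape \<gamma>)"
  unfolding wulff_shape_def
  by (intro convex_INT) (auto simp: inner_commute convex_halfspace_le)

lemma closed_wulff_shape: "closed (wulff_shape \<gamma>)"
  unfolding wulff_shape_def
  by (intro closed_INT) (auto simp: inner_commute closed_halfspace_le)

lemma bounded_wulff_shape: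
  fixes \<gamma> :: "'a::euclidean_space \<Rightarrow> real"
  assumes "continuous_on (sphere 0 1) \<gamma>"
  shows "bounded (wulff_shape \<gamma>)"
proof -
  have "sphere (0::'a) 1 \<noteq> {}" by simp
  then obtain M where M: "\<And>\<theta>. \<theta> \<in> sphere 0 1 \<Longrightarrow> \<gamma> \<theta> \<le> M"
    using continuous_attains_sup[OF compact_sphere _ assms] by blast
  have "wulff_shape \<gamma> \<subseteq> cball 0 \<bar>M\<bar>"
  proof
    fix x assume "x \<in> wulff_shape \<gamma>"
    then have "x \<noteq> 0 \<Longrightarrow> norm x \<le> M"
      using norm_le_wulff_shape M[of "sgn x"] by (fastforce simp: norm_sgn)
    then show "x \<in> cball 0 \<bar>M\<bar>" by (cases "x = 0") auto
  qed
  then show ?thesis using bounded_cball bounded_subset by blast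
qed

lemma zero_in_interior_wulff_shape:
  fixes \<gamma> :: "'a::euclidean_space \<Rightarrow> real"
  assumes "continuous_on (sphere 0 1) \<gamma>" "\<forall>\<theta>\<in>sphere 0 1. \<gamma> \<theta> > 0"
  shows "0 \<in> interior (wulff_shape \<gamma>)"
proof -
  have "sphere (0::'a) 1 \<noteq> {}" by simp
  then obtain m where m: "m \<in> sphere 0 1" "\<And>\<theta>. \<theta> \<in> sphere 0 1 \<Longrightarrow> \<gamma> m \<le> \<gamma> \<theta>"
    using continuous_attains_inf[OF compact_sphere _ assms(1)] by blast
  have "ball 0 (\<gamma> m) \<subseteq> wulff_shape \<gamma>"
    using cball_subset_wulff_shape[of "\<gamma> m" \<gamma>] m(2) ball_subset_cball by blast
  then have "ball 0 (\<gamma> m) \<subseteq> interior (wulff_shape \<gamma>)"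
    by (simp add: interior_maximal)
  moreover have "\<gamma> m > 0" using assms(2) m(1) by blast
  ultimately show ?thesis by auto
qed

lemma frontier_ray_parameter:
  fixes S :: "'a::euclidean_space set"
  assumes "convex S" "closed S" "bounded S" "0 \<in> interior S" "p \<noteq> 0"
  defines "r \<equiv> THE r. r > 0 \<and> r *\<^sub>R p \<in> frontier S"
  shows "r > 0" and "r *\<^sub>R p \<in> S" and "\<And>s. s > 0 \<Longrightarrow> s *\<^sub>R p \<in> S \<Longrightarrow> s \<le> r"
proof -
  obtain d where d: "0 < d" "d *\<^sub>R p \<in> frontier S"
    "\<And>e. 0 \<le> e \<Longrightarrow> e < d \<Longrightarrow> e *\<^sub>R p \<in> interior S"
    using ray_to_frontier[OF assms(3-5)] by auto
  have maximal: "s \<le> d" if "s > 0" "s *\<^sub>R p \<in> S" for s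
  proof (rule ccontr)
    assume "\<not> s \<le> d"
    \<comment> \<open>\<open>d p\<close> would lie strictly between the interior point \<open>0\<close> and the point \<open>s p\<close> of \<open>S\<close>\<close>
    then have "s *\<^sub>R p - (1 - d / s) *\<^sub>R (s *\<^sub>R p - 0) \<in> interior S"
      using that d(1) assms(1,4) by (intro mem_interior_convex_shrink) (auto simp: field_simps)
    moreover have "s *\<^sub>R p - (1 - d / s) *\<^sub>R (s *\<^sub>R p - 0) = d *\<^sub>R p"
      using that by (simp add: algebra_simps)
    ultimately show False using d(2) by (simp add: frontier_def)
  qed
  have "r = d"
    unfolding r_def
  proof (rule the_equality)
    fix r assume r: "0 < r \<and> r *\<^sub>R p \<in> frontier S"
    then have "r \<le> d" using maximal assms(2) frontier_subset_closed by blast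
    moreover have "\<not> r < d" using d(3)[of r] r by (auto simp: frontier_def)
    ultimately show "r = d" by simp
  qed (use d in simp)
  then show "r > 0" and "r *\<^sub>R p \<in> S" and "\<And>s. s > 0 \<Longrightarrow> s *\<^sub>R p \<in> S \<Longrightarrow> s \<le> r"
    using d assms(2) frontier_subset_closed maximal by auto
qed

lemma
  fixes \<gamma> :: "'a::euclidean_space \<Rightarrow> real"
  assumes "continuous_on (sphere 0 1) \<gamma>" "\<forall>\<theta>\<in>sphere 0 1. \<gamma> \<theta> > 0" "p \<noteq> 0"
  shows wulff_radial_pos: "wulff_radial \<gamma> p > 0"
    and wulff_radial_mem: "wulff_radial \<gamma> p *\<^sub>R p \<in> wulff_shape \<gamma>"
    and wulff_radial_maximal:
      "\<And>s. s > 0 \<Longrightarrow> s *\<^sub>R p \<in> wulff_shape \<gamma> \<Longrightarrow> s \<le> wulff_radial \<gamma> p"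
  using frontier_ray_parameter[OF convex_wulff_shape closed_wulff_shape
      bounded_wulff_shape[OF assms(1)] zero_in_interior_wulff_shape[OF assms(1,2)] assms(3)]
  unfolding wulff_radial_def by auto

lemma self_dual_symmetric_subset_cball:
  fixes \<gamma> :: "'a::euclidean_space \<Rightarrow> real"
  assumes "continuous_on (sphere 0 1) \<gamma>" "\<forall>\<theta>\<in>sphere 0 1. \<gamma> \<theta> > 0" "self_dual \<gamma>"
    and symmetric: "\<forall>x\<in>wulff_shape \<gamma>. - x \<in> wulff_shape \<gamma>"
  shows "wulff_shape \<gamma> \<subseteq> cball 0 1"
proof
  fix x assume x: "x \<in> wulff_shape \<gamma>"
  show "x \<in> cball 0 1"
  proof (cases "x = 0")
    case False
    define w where "w = wulff_radial \<gamma> (- sgn x)"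
    have "x \<in> dual_wulff_shape \<gamma>" using x assms(3) by (simp add: self_dual_def)
    then have "norm x \<le> 1 / w"
      using norm_le_wulff_shape[of x "dual_gamma \<gamma>"] False
      by (simp add: dual_wulff_shape_def dual_gamma_def w_def)
    moreover have "norm x \<le> w"
    proof -
      have "norm x *\<^sub>R (- sgn x) = - x" using False by (simp add: sgn_div_norm)
      then show ?thesis
        using wulff_radial_maximal[OF assms(1,2), of "- sgn x" "norm x"] symmetric x False
        by (simp add: w_def sgn_zero_iff)
    qed
    moreover have "w > 0"
      using wulff_radial_pos[OF assms(1,2)] False by (simp add: w_def sgn_zero_iff)
    ultimately have "(norm x)\<^sup>2 \<le> 1"
      using mult_left_mono[of "norm x" w "norm x"]
      by (simp add: le_divide_eq mult.commute power2_eq_square)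
    then show ?thesis by (simp add: abs_square_le_1)
  qed simp
qed

lemma self_dual_cball_subset:
  fixes \<gamma> :: "'a::euclidean_space \<Rightarrow> real"
  assumes "continuous_on (sphere 0 1) \<gamma>" "\<forall>\<theta>\<in>sphere 0 1. \<gamma> \<theta> > 0" "self_dual \<gamma>"
    and "wulff_shape \<gamma> \<subseteq> cball 0 1"
  shows "cball 0 1 \<subseteq> wulff_shape \<gamma>"
proof -
  have "1 \<le> dual_gamma \<gamma> \<theta>" if "\<theta> \<in> sphere 0 1" for \<theta>
  proof -
    have "- \<theta> \<noteq> 0" using that by auto
    then have "wulff_radial \<gamma> (- \<theta>) \<le> 1" "wulff_radial \<gamma> (- \<theta>) > 0"
      using wulff_radial_mem[OF assms(1,2)] wulff_radial_pos[OF assms(1,2)] assms(4) that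
      by fastforce+
    then show ?thesis by (simp add: dual_gamma_def)
  qed
  then show ?thesis
    using cball_subset_wulff_shape[of 1 "dual_gamma \<gamma>"] assms(3)
    by (simp add: self_dual_def dual_wulff_shape_def)
qed

theorem proposition4p1:
  fixes \<gamma> :: "'a::euclidean_space \<Rightarrow> real"
  assumes "continuous_on (sphere 0 1) \<gamma>"
    and "\<forall>\<theta>\<in>sphere 0 1. \<gamma> \<theta> > 0"
    and "self_dual \<gamma>"
  shows "(\<forall>x\<in>wulff_shape \<gamma>. - x \<in> wulff_shape \<gamma>) \<longleftrightarrow> wulff_shape \<gamma> = cball 0 1"
proof
  assume "\<forall>x\<in>wulff_shape \<gamma>. - x \<in> wulff_shape \<gamma>"
  then have "wulff_shape \<gamma> \<subseteq> cball 0 1"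
    using self_dual_symmetric_subset_cball assms by blast
  with self_dual_cball_subset[OF assms] show "wulff_shape \<gamma> = cball 0 1" by blast
qed simp

end
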